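(* Let $p$ be a prime number, and let $N,n\ge 1$ and $\nu\ge 0$ be integers with $n\not\equiv 0\pmod{p-1}$. If $$\mathrm{ord}_p(N-1)\ \ge\ \nu+1+\mathrm{ord}_p\Big(\prod_{k=0}^{n}(1+k)!\Big)+\mathrm{ord}_p(n),$$ then $$\frac{B_{N,n}}{n}\equiv\frac{B_n}{n}\pmod{p^{\nu+1}}.$$
   Context: For a positive integer $N$, the hypergeometric Bernoulli numbers $B_{N,n}$ are defined by $\frac{x^N/N!}{e^x-\sum_{n=0}^{N-1}x^n/n!}=\sum_{n\ge0} B_{N,n}\frac{x^n}{n!}$, and the classical Bernoulli numbers $B_n$ by $\frac{x}{e^x-1}=\sum_{n\ge0}B_n\frac{x^n}{n!}$. $\mathrm{ord}_p$ denotes the $p$-adic valuation on $\mathbb{Q}$ (with $\mathrm{ord}_p(0)=\infty$); for rationals $a,b$, $a\equiv b\pmod{p^s}$ means $\mathrm{ord}_p(a-b)\ge s$. *)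

theory Defs
  imports "HOL-Computational_Algebra.Computational_Algebra"
begin

definition hyp_bernoulli :: "nat \<Rightarrow> nat \<Rightarrow> rat" where
  "hyp_bernoulli N n = fact n *
     ((fps_X ^ N / fps_const (fact N)) /
      (fps_exp 1 - (\<Sum>k<N. fps_X ^ k / fps_const (fact k)))) $ n"

definition bernoulli_num :: "nat \<Rightarrow> rat" where
  "bernoulli_num n = fact n * (fps_X / (fps_exp 1 - 1)) $ n"

text \<open>p-adic valuation of a nonzero rational (value for 0 is irrelevant, see qcong).\<close>
definition ord_rat :: "nat \<Rightarrow> rat \<Rightarrow> int" where
  "ord_rat p q = (let (a, b) = quotient_of q in
      int (multiplicity (int p) a) - int (multiplicity (int p) b))"

text \<open>a \<equiv> b (mod p^s) for rationals: ord_p(a-b) \<ge> s, with ord_p 0 = \<infinity>.\<close>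
definition qcong :: "nat \<Rightarrow> nat \<Rightarrow> rat \<Rightarrow> rat \<Rightarrow> bool" where
  "qcong p s a b \<longleftrightarrow> a = b \<or> int s \<le> ord_rat p (a - b)"

end

theory Submission
  imports Defs
begin

text \<open>
  Put b_N(m) = B_{N,m}/m!. Comparing coefficients of x^(m+N) in
  x^N/N! = (e^x - sum_{k<N} x^k/k!) * sum_m b_N(m) x^m gives the recurrence
  b_N(m) = - sum_{i<m} w_N(m-i)/(m-i+1)! * b_N(i) with weights
  w_N(k) = N!(k+1)!/(k+N)! = prod_{j=1..k} 1/(1 + (N-1)/(1+j)); the classical Bernoulli
  numbers are the case N = 1, where all weights are 1. For k <= n every factor is congruent
  to 1 modulo p^S with S = ord_p(N-1) - ord_p(n!), because ord_p(1+j) <= ord_p(n!) for j <= n;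
  for j = n this is where (p-1) not dividing n is needed: it prevents n+1 from being a power
  of p. Multiplying the recurrences by the superfactorial 1!2!...(m+1)! makes them p-integral,
  and induction on m shows that the scaled values of b_N and b_1 agree modulo p^S. Undoing
  the scaling costs exactly the valuations in the hypothesis.
\<close>

section \<open>The recurrence for hypergeometric Bernoulli numbers\<close>

lemma fps_exp_minus_partial_sum_nth:
  "(fps_exp 1 - (\<Sum>k<N. fps_X ^ k / fps_const (fact k)) :: rat fps) $ j =
     (if j < N then 0 else 1 / fact j)"
proof -
  have "(\<Sum>k<N. fps_X ^ k / fps_const (fact k) :: rat fps) $ j
        = (\<Sum>k<N. (if j = k then inverse (fact k) else 0))"
    unfolding fps_sum_nth by (intro sum.cong refl) simp
  also have "\<dots> = (if j < N then inverse (fact j) else 0)"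
    by (simp add: sum.delta)
  finally show ?thesis
    by (simp add: divide_inverse)
qed

lemma hyp_bernoulli_convolution:
  "(\<Sum>i\<le>m. hyp_bernoulli N i / fact i / fact (m + N - i)) = (if m = 0 then 1 / fact N else 0)"
proof -
  define F where "F = (fps_X ^ N / fps_const (fact N) :: rat fps)"
  define D where "D = (fps_exp 1 - (\<Sum>k<N. fps_X ^ k / fps_const (fact k)) :: rat fps)"
  have Dn: "D $ j = (if j < N then 0 else 1 / fact j)" for j
    unfolding D_def by (rule fps_exp_minus_partial_sum_nth)
  have Fn: "F $ j = (if j = N then 1 / fact N else 0)" for j
    unfolding F_def by (simp add: divide_inverse)
  have "D \<noteq> 0" "F \<noteq> 0"
    using Dn[of N] Fn[of N] by auto
  moreover have "subdegree D = N" "subdegree F = N"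
    by (rule subdegreeI; simp add: Dn Fn)+
  ultimately have "F / D * D = F"
    by (intro dvd_div_mult_self) (simp add: fps_dvd_iff)
  then have "(F / D * D) $ (m + N) = F $ (m + N)"
    by simp
  moreover have "(F / D * D) $ (m + N) = (\<Sum>i\<le>m. (F / D) $ i / fact (m + N - i))"
  proof -
    have "(F / D * D) $ (m + N) = (\<Sum>i\<le>m. (F / D) $ i * D $ (m + N - i))"
      unfolding fps_mult_nth atMost_atLeast0
      by (rule sum.mono_neutral_right) (auto simp: Dn)
    also have "\<dots> = (\<Sum>i\<le>m. (F / D) $ i / fact (m + N - i))"
      by (intro sum.cong refl) (auto simp: Dn divide_inverse)
    finally show ?thesis .
  qed
  moreover have "hyp_bernoulli N i / fact i = (F / D) $ i" for i
    unfolding hyp_bernoulli_def F_def D_def by simp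
  ultimately show ?thesis
    by (simp add: Fn)
qed

lemma hyp_bernoulli_0: "hyp_bernoulli N 0 = 1"
  using hyp_bernoulli_convolution[of N 0] by simp

lemma bernoulli_num_eq_hyp_bernoulli_1: "bernoulli_num n = hyp_bernoulli 1 n"
  unfolding bernoulli_num_def hyp_bernoulli_def by simp

definition hyp_weight :: "nat \<Rightarrow> nat \<Rightarrow> rat" where
  "hyp_weight N k = fact N * fact (k + 1) / fact (k + N)"

lemma hyp_weight_Suc_0: "hyp_weight (Suc 0) k = 1"
  by (simp add: hyp_weight_def)

lemma hyp_weight_eq_prod:
  assumes "N \<ge> 1"
  shows "hyp_weight N k = (\<Prod>j\<in>{1..k}. 1 / (1 + of_nat (N - 1) / of_nat (1 + j)))"
proof (induction k)
  case 0
  then show ?case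
    by (simp add: hyp_weight_def)
next
  case (Suc k)
  have "hyp_weight N (Suc k) = hyp_weight N k * (1 / (1 + of_nat (N - 1) / of_nat (2 + k)))"
    using assms by (simp add: hyp_weight_def field_simps of_nat_diff)
  then show ?case
    using Suc by (simp add: prod.nat_ivl_Suc' ac_simps)
qed

lemma hyp_bernoulli_recurrence:
  assumes "m \<ge> 1"
  shows "hyp_bernoulli N m / fact m =
           - (\<Sum>i<m. hyp_weight N (m - i) / fact (m - i + 1) * (hyp_bernoulli N i / fact i))"
proof -
  have weight: "hyp_weight N (m - i) / fact (m - i + 1) = fact N / fact (m + N - i)" if "i < m" for i
    using that by (simp add: hyp_weight_def add.commute)
  have "hyp_bernoulli N m / fact m / fact N
          + (\<Sum>i<m. hyp_bernoulli N i / fact i / fact (m + N - i)) = 0"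
    using hyp_bernoulli_convolution[of N m] assms by (simp add: lessThan_Suc_atMost[symmetric])
  then have "hyp_bernoulli N m / fact m =
      - (fact N * (\<Sum>i<m. hyp_bernoulli N i / fact i / fact (m + N - i)))"
    by (simp add: field_simps add_eq_0_iff)
  also have "\<dots> = - (\<Sum>i<m. hyp_weight N (m - i) / fact (m - i + 1) * (hyp_bernoulli N i / fact i))"
    unfolding sum_distrib_left mult_minus_left
    by (intro arg_cong[where f = uminus] sum.cong refl) (simp only: lessThan_iff weight, simp)
  finally show ?thesis .
qed

section \<open>Factorials and superfactorials\<close>

lemma pred_dvd_power_minus_1: "(p - 1) dvd (p ^ a - 1 :: nat)"
proof (cases "p = 0")
  case True
  then show ?thesis
    by (cases a) simp_all
next
  case False
  then have "p \<ge> 1"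
    by simp
  have "int (p ^ a - 1) = (int p - 1) * (\<Sum>i<a. int p ^ i)"
    using \<open>p \<ge> 1\<close> power_diff_1_eq[of "int p" a] by (simp add: of_nat_diff)
  then have "int (p - 1) dvd int (p ^ a - 1)"
    using \<open>p \<ge> 1\<close> by (simp add: of_nat_diff)
  then show ?thesis
    by (simp only: of_nat_dvd_iff)
qed

definition superfact :: "nat \<Rightarrow> nat" where
  "superfact m = (\<Prod>k=1..m. fact k)"

lemma superfact_pos: "superfact m > 0"
  unfolding superfact_def by (simp add: fact_gt_zero)

lemma superfact_Suc_eq_prod: "superfact (Suc n) = (\<Prod>k=0..n. fact (1 + k))"
  unfolding superfact_def One_nat_def prod.shift_bounds_cl_Suc_ivl by simp

lemma fact_dvd_superfact:
  assumes "n \<le> m"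
  shows "fact n dvd superfact m"
proof (cases "n = 0")
  case False
  then have "fact m dvd superfact m"
    unfolding superfact_def using assms by (intro dvd_prodI) auto
  then show ?thesis
    by (rule dvd_trans[OF fact_dvd[OF assms]])
qed simp

lemma superfact_mult_fact_dvd:
  assumes "i < m"
  shows "superfact (Suc i) * fact (m - i + 1) dvd superfact (Suc m)"
proof -
  have "superfact (Suc m) = superfact (Suc i) * (\<Prod>k=Suc (Suc i)..Suc m. fact k)"
  proof -
    have "Suc i + (m - i) = Suc m" "Suc i + 1 = Suc (Suc i)" "1 \<le> Suc i + 1"
      using assms by simp_all
    then show ?thesis
      using prod.ub_add_nat[of 1 "Suc i" fact "m - i"] unfolding superfact_def by (simp only:) blast
  qed
  moreover have "fact (m - i + 1) dvd (fact (Suc m) :: nat)"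
    by (rule fact_dvd) simp
  moreover have "fact (Suc m) dvd (\<Prod>k=Suc (Suc i)..Suc m. fact k :: nat)"
    using assms by (intro dvd_prodI) auto
  ultimately show ?thesis
    using mult_dvd_mono[OF dvd_refl dvd_trans] by metis
qed

lemma recurrence_times_superfact:
  fixes b w :: "nat \<Rightarrow> rat"
  assumes "b m = - (\<Sum>i<m. w (m - i) / fact (m - i + 1) * b i)"
  shows "b m * of_nat (superfact (Suc m)) =
           - (\<Sum>i<m. w (m - i) * (b i * of_nat (superfact (Suc i)))
                 * of_nat (superfact (Suc m) div (superfact (Suc i) * fact (m - i + 1))))"
proof -
  have split: "(of_nat (superfact (Suc m)) :: rat) =
      of_nat (superfact (Suc i)) * fact (m - i + 1)
        * of_nat (superfact (Suc m) div (superfact (Suc i) * fact (m - i + 1)))"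
    if "i < m" for i
  proof -
    have "superfact (Suc m) = superfact (Suc i) * fact (m - i + 1)
            * (superfact (Suc m) div (superfact (Suc i) * fact (m - i + 1)))"
      using superfact_mult_fact_dvd[OF that] by simp
    then show ?thesis
      by (metis of_nat_mult of_nat_fact)
  qed
  show ?thesis
    unfolding assms sum_distrib_right mult_minus_left
    by (intro arg_cong[where f = uminus] sum.cong refl) (simp only: lessThan_iff split, simp)
qed

section \<open>Rationals of bounded-below \<open>p\<close>-adic valuation\<close>

text \<open>Phrased through a representation instead of \<^const>\<open>ord_rat\<close>, which makes closure
  under sums and products elementary.\<close>
definition pval_ge :: "nat \<Rightarrow> int \<Rightarrow> rat \<Rightarrow> bool" where
  "pval_ge p s x \<longleftrightarrow>
     (\<exists>a b. b \<noteq> 0 \<and> \<not> int p dvd b \<and> x = of_int a / of_int b * of_nat p powi s)"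

lemma pval_geI:
  "b \<noteq> 0 \<Longrightarrow> \<not> int p dvd b \<Longrightarrow> x = of_int a / of_int b * of_nat p powi s \<Longrightarrow> pval_ge p s x"
  unfolding pval_ge_def by blast

lemma pval_geE:
  assumes "pval_ge p s x"
  obtains a b where "b \<noteq> 0" "\<not> int p dvd b" "x = of_int a / of_int b * of_nat p powi s"
  using assms unfolding pval_ge_def by blast

context
  fixes p :: nat
  assumes prime: "prime p"
begin

lemma of_nat_prime_nonzero: "(of_nat p :: rat) \<noteq> 0"
  using prime by (auto dest: prime_gt_0_nat)

lemma not_dvd_mult_if_not_dvd:
  "\<not> int p dvd b \<Longrightarrow> \<not> int p dvd d \<Longrightarrow> \<not> int p dvd b * d"
  using prime by (simp add: prime_dvd_mult_iff)

lemma pval_ge_add: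
  assumes "pval_ge p s x" "pval_ge p s y"
  shows "pval_ge p s (x + y)"
proof -
  obtain a b where ab: "b \<noteq> 0" "\<not> int p dvd b" "x = of_int a / of_int b * of_nat p powi s"
    using assms(1) by (rule pval_geE)
  obtain c d where cd: "d \<noteq> 0" "\<not> int p dvd d" "y = of_int c / of_int d * of_nat p powi s"
    using assms(2) by (rule pval_geE)
  have "x + y = of_int (a * d + c * b) / of_int (b * d) * of_nat p powi s"
    using ab cd by (simp add: field_simps)
  then show ?thesis
    using ab cd not_dvd_mult_if_not_dvd by (intro pval_geI[where b = "b * d" and a = "a * d + c * b"]) auto
qed

lemma pval_ge_mult:
  assumes "pval_ge p s x" "pval_ge p t y"
  shows "pval_ge p (s + t) (x * y)"
proof -
  obtain a b where ab: "b \<noteq> 0" "\<not> int p dvd b" "x = of_int a / of_int b * of_nat p powi s"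
    using assms(1) by (rule pval_geE)
  obtain c d where cd: "d \<noteq> 0" "\<not> int p dvd d" "y = of_int c / of_int d * of_nat p powi t"
    using assms(2) by (rule pval_geE)
  have "x * y = of_int (a * c) / of_int (b * d) * of_nat p powi (s + t)"
    using ab cd of_nat_prime_nonzero by (simp add: field_simps power_int_add)
  then show ?thesis
    using ab cd not_dvd_mult_if_not_dvd by (intro pval_geI[where b = "b * d" and a = "a * c"]) auto
qed

lemma pval_ge_mono:
  assumes "pval_ge p s x" "t \<le> s"
  shows "pval_ge p t x"
proof -
  obtain a b where ab: "b \<noteq> 0" "\<not> int p dvd b" "x = of_int a / of_int b * of_nat p powi s"
    using assms(1) by (rule pval_geE)
  have "(of_nat p :: rat) powi s = of_nat p ^ nat (s - t) * of_nat p powi t"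
    using of_nat_prime_nonzero assms(2) by (simp flip: power_int_add power_int_of_nat)
  then have "x = of_int (a * int p ^ nat (s - t)) / of_int b * of_nat p powi t"
    using ab by simp
  then show ?thesis
    using ab by (intro pval_geI)
qed

lemma pval_ge_mult_mono:
  "pval_ge p s x \<Longrightarrow> pval_ge p t y \<Longrightarrow> r \<le> s + t \<Longrightarrow> pval_ge p r (x * y)"
  using pval_ge_mult pval_ge_mono by blast

lemma pval_ge_of_int: "pval_ge p 0 (of_int a)"
  by (intro pval_geI[of 1]) (use prime in \<open>auto simp: prime_gt_1_nat\<close>)

lemma pval_ge_of_nat: "pval_ge p 0 (of_nat k)"
  using pval_ge_of_int[of "int k"] by simp

lemma pval_ge_0: "pval_ge p s 0"
  by (intro pval_geI[where a = 0 and b = 1]) (use prime in \<open>auto simp: prime_gt_1_nat\<close>)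

lemma pval_ge_uminus: "pval_ge p s x \<Longrightarrow> pval_ge p s (- x)"
  unfolding pval_ge_def by (metis minus_divide_left mult_minus_left of_int_minus)

lemma pval_ge_sum: "(\<And>i. i \<in> A \<Longrightarrow> pval_ge p s (f i)) \<Longrightarrow> pval_ge p s (\<Sum>i\<in>A. f i)"
  by (induction A rule: infinite_finite_induct) (auto simp: pval_ge_0 pval_ge_add)

lemma pval_ge_of_nat_multiplicity:
  assumes "m > 0"
  shows "pval_ge p (int (multiplicity p m)) (of_nat m)"
    and "pval_ge p (- int (multiplicity p m)) (1 / of_nat m)"
proof -
  define e where "e = multiplicity p m"
  obtain v where v: "m = p ^ e * v" "\<not> p dvd v"
    using assms prime unfolding e_def by (metis multiplicity_decompose' not_prime_unit neq0_conv)
  have v0: "int v \<noteq> 0" "\<not> int p dvd int v"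
    using v assms by auto
  have m: "(of_nat m :: rat) = of_int (int v) / of_int 1 * of_nat p powi (int e)"
    unfolding v by simp
  show "pval_ge p (int (multiplicity p m)) (of_nat m)"
    unfolding e_def[symmetric] using prime by (intro pval_geI[OF _ _ m]) (auto simp: prime_gt_1_nat)
  have inv: "1 / (of_nat m :: rat) = of_int 1 / of_int (int v) * of_nat p powi (- int e)"
    unfolding v using of_nat_prime_nonzero by (simp add: power_int_minus field_simps)
  show "pval_ge p (- int (multiplicity p m)) (1 / of_nat m)"
    unfolding e_def[symmetric] by (rule pval_geI[OF v0 inv])
qed

lemma pval_ge_inverse_one_plus:
  assumes "pval_ge p s t" "s \<ge> 1"
  shows "pval_ge p 0 (1 / (1 + t))" "pval_ge p s (1 / (1 + t) - 1)"
proof -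
  obtain a b where ab: "b \<noteq> 0" "\<not> int p dvd b" "t = of_int a / of_int b * of_nat p powi s"
    using assms(1) by (rule pval_geE)
  define e where "e = nat s"
  have "e \<ge> 1" "s = int e"
    using assms unfolding e_def by simp_all
  then have t: "t = of_int (a * int p ^ e) / of_int b"
    using ab by simp
  have p_dvd: "int p dvd a * int p ^ e"
    using \<open>e \<ge> 1\<close> by (simp add: dvd_power)
  have nd: "\<not> int p dvd b + a * int p ^ e"
    using ab(2) dvd_add_left_iff[OF p_dvd] by simp
  then have "b + a * int p ^ e \<noteq> 0"
    by (metis dvd_0_right)
  then have inv: "1 / (1 + t) = of_int b / of_int (b + a * int p ^ e)"
    using ab(1) unfolding t by (simp add: field_simps del: of_int_add of_int_mult of_int_power)
  show unit: "pval_ge p 0 (1 / (1 + t))"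
    unfolding inv using nd \<open>b + a * int p ^ e \<noteq> 0\<close> by (intro pval_geI) auto
  have "1 / (1 + t) - 1 = - t * (1 / (1 + t))"
    using inv \<open>b + a * int p ^ e \<noteq> 0\<close> ab(1) unfolding t
    by (simp add: field_simps del: of_int_add of_int_mult of_int_power)
  then show "pval_ge p s (1 / (1 + t) - 1)"
    using pval_ge_mult[OF pval_ge_uminus[OF assms(1)] unit] by simp
qed

lemma pval_ge_prod_near_one:
  assumes "\<And>j. j \<in> A \<Longrightarrow> pval_ge p 0 (f j) \<and> pval_ge p s (f j - 1)"
  shows "pval_ge p 0 (prod f A) \<and> pval_ge p s (prod f A - 1)"
  using assms
proof (induction A rule: infinite_finite_induct)
  case (insert x F)
  have fx: "pval_ge p 0 (f x)" "pval_ge p s (f x - 1)"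
    and fF: "pval_ge p 0 (prod f F)" "pval_ge p s (prod f F - 1)"
    using insert by auto
  have prod_eq: "prod f (insert x F) = f x * prod f F"
    using insert.hyps by simp
  have "pval_ge p s ((f x - 1) * prod f F)"
    using pval_ge_mult[OF fx(2) fF(1)] by simp
  then have "pval_ge p s ((f x - 1) * prod f F + (prod f F - 1))"
    using fF(2) by (rule pval_ge_add)
  moreover have "(f x - 1) * prod f F + (prod f F - 1) = prod f (insert x F) - 1"
    unfolding prod_eq by (simp add: algebra_simps)
  ultimately show ?case
    using pval_ge_mult[OF fx(1) fF(1)] unfolding prod_eq by simp
qed (auto simp: pval_ge_0 pval_ge_of_int[of 1, simplified])

lemma ord_rat_ge_if_pval_ge:
  assumes "x \<noteq> 0" "pval_ge p (int s) x"
  shows "int s \<le> ord_rat p x"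
proof -
  obtain a b where ab: "b \<noteq> 0" "\<not> int p dvd b" "x = of_int a / of_int b * of_nat p powi int s"
    using assms(2) by (rule pval_geE)
  obtain a' b' where q: "quotient_of x = (a', b')"
    by (cases "quotient_of x")
  have "b' > 0" "x = of_int a' / of_int b'"
    using q by (simp_all add: quotient_of_denom_pos quotient_of_div)
  then have "a' \<noteq> 0" "a \<noteq> 0"
    using assms(1) ab by auto
  have "(of_int (a' * b) :: rat) = of_int (a * int p ^ s * b')"
    using ab \<open>b' > 0\<close> \<open>x = of_int a' / of_int b'\<close> by (simp add: field_simps)
  then have eq: "a' * b = a * int p ^ s * b'"
    by (simp only: of_int_eq_iff)
  have "prime_elem (int p)" "int p \<noteq> 0"
    using prime by (auto dest: prime_gt_0_nat)
  then have "multiplicity (int p) a' = multiplicity (int p) a + s + multiplicity (int p) b'"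
    using arg_cong[OF eq, of "multiplicity (int p)"] \<open>a' \<noteq> 0\<close> \<open>a \<noteq> 0\<close> \<open>b' > 0\<close> ab(1,2)
    by (simp add: prime_elem_multiplicity_mult_distrib not_dvd_imp_multiplicity_0)
  then show ?thesis
    unfolding ord_rat_def q by simp
qed

lemma qcong_if_pval_ge: "pval_ge p (int s) (x - y) \<Longrightarrow> qcong p s x y"
  unfolding qcong_def using ord_rat_ge_if_pval_ge[of "x - y" s] by auto

lemma multiplicity_Suc_le_multiplicity_fact:
  assumes "\<not> (p - 1) dvd n" "n \<ge> 1" "j \<le> n"
  shows "multiplicity p (Suc j) \<le> multiplicity p (fact n)"
proof (cases "j < n")
  case True
  then have "Suc j dvd (fact n :: nat)"
    by (intro dvd_fact) auto
  then show ?thesis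
    by (intro dvd_imp_multiplicity_le) auto
next
  case False
  define a where "a = multiplicity p (Suc n)"
  obtain c where c: "Suc n = p ^ a * c"
    using multiplicity_dvd[of p "Suc n"] unfolding a_def by (auto elim: dvdE)
  have "p ^ a \<ge> 1"
    using prime_gt_0_nat[OF prime] by simp
  have "c \<noteq> 1"
  proof
    assume "c = 1"
    then have "n = p ^ a - 1"
      using c by simp
    then show False
      using assms(1) pred_dvd_power_minus_1[of p a] by simp
  qed
  moreover have "c \<noteq> 0"
    using c by (cases c) auto
  ultimately have "p ^ a * 2 \<le> Suc n"
    unfolding c by simp
  then have "p ^ a dvd fact n"
    using \<open>p ^ a \<ge> 1\<close> by (intro dvd_fact) auto
  then have "a \<le> multiplicity p (fact n)"
    using prime by (intro multiplicity_geI) (auto simp: fact_nonzero)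
  then show ?thesis
    using False assms(3) unfolding a_def by simp
qed

section \<open>Comparing two recurrences\<close>

lemma pval_ge_superfact_scaled:
  fixes b w :: "nat \<Rightarrow> rat"
  assumes "b 0 = 1"
    and rec: "\<And>m. 1 \<le> m \<Longrightarrow> m \<le> n \<Longrightarrow> b m = - (\<Sum>i<m. w (m - i) / fact (m - i + 1) * b i)"
    and w: "\<And>k. 1 \<le> k \<Longrightarrow> k \<le> n \<Longrightarrow> pval_ge p 0 (w k)"
  shows "m \<le> n \<Longrightarrow> pval_ge p 0 (b m * of_nat (superfact (Suc m)))"
proof (induction m rule: less_induct)
  case (less m)
  show ?case
  proof (cases "m = 0")
    case True
    then show ?thesis
      using \<open>b 0 = 1\<close> pval_ge_of_nat by simp
  next
    case False
    then have "1 \<le> m"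
      by simp
    have "pval_ge p 0 (w (m - i) * (b i * of_nat (superfact (Suc i))) * of_nat q)"
      if "i < m" for i q
    proof -
      have "pval_ge p 0 (w (m - i))" "pval_ge p 0 (b i * of_nat (superfact (Suc i)))"
        using that less by (auto intro: w)
      from pval_ge_mult[OF pval_ge_mult[OF this] pval_ge_of_nat[of q]] show ?thesis
        by simp
    qed
    then show ?thesis
      unfolding recurrence_times_superfact[OF rec[OF \<open>1 \<le> m\<close> less.prems]]
      by (auto intro!: pval_ge_uminus pval_ge_sum)
  qed
qed

lemma pval_ge_superfact_scaled_diff:
  fixes b\<^sub>1 b\<^sub>2 w\<^sub>1 w\<^sub>2 :: "nat \<Rightarrow> rat"
  assumes "b\<^sub>1 0 = 1" "b\<^sub>2 0 = 1"
    and rec\<^sub>1: "\<And>m. 1 \<le> m \<Longrightarrow> m \<le> n \<Longrightarrow> b\<^sub>1 m = - (\<Sum>i<m. w\<^sub>1 (m - i) / fact (m - i + 1) * b\<^sub>1 i)"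
    and rec\<^sub>2: "\<And>m. 1 \<le> m \<Longrightarrow> m \<le> n \<Longrightarrow> b\<^sub>2 m = - (\<Sum>i<m. w\<^sub>2 (m - i) / fact (m - i + 1) * b\<^sub>2 i)"
    and w: "\<And>k. 1 \<le> k \<Longrightarrow> k \<le> n \<Longrightarrow>
              pval_ge p 0 (w\<^sub>1 k) \<and> pval_ge p 0 (w\<^sub>2 k) \<and> pval_ge p s (w\<^sub>1 k - w\<^sub>2 k)"
    and "s \<ge> 0"
  shows "m \<le> n \<Longrightarrow> pval_ge p s ((b\<^sub>1 m - b\<^sub>2 m) * of_nat (superfact (Suc m)))"
proof (induction m rule: less_induct)
  case (less m)
  show ?case
  proof (cases "m = 0")
    case True
    then show ?thesis
      using assms(1,2) pval_ge_0 by simp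
  next
    case False
    then have "1 \<le> m"
      by simp
    define c :: "nat \<Rightarrow> rat"
      where "c i = of_nat (superfact (Suc m) div (superfact (Suc i) * fact (m - i + 1)))" for i
    define B\<^sub>1 B\<^sub>2 :: "nat \<Rightarrow> rat"
      where "B\<^sub>1 i = b\<^sub>1 i * of_nat (superfact (Suc i))"
        and "B\<^sub>2 i = b\<^sub>2 i * of_nat (superfact (Suc i))" for i
    have B\<^sub>1_rec: "B\<^sub>1 m = - (\<Sum>i<m. w\<^sub>1 (m - i) * B\<^sub>1 i * c i)"
      unfolding B\<^sub>1_def c_def by (rule recurrence_times_superfact[OF rec\<^sub>1[OF \<open>1 \<le> m\<close> less.prems]])
    have B\<^sub>2_rec: "B\<^sub>2 m = - (\<Sum>i<m. w\<^sub>2 (m - i) * B\<^sub>2 i * c i)"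
      unfolding B\<^sub>2_def c_def by (rule recurrence_times_superfact[OF rec\<^sub>2[OF \<open>1 \<le> m\<close> less.prems]])
    have "(b\<^sub>1 m - b\<^sub>2 m) * of_nat (superfact (Suc m)) = B\<^sub>1 m - B\<^sub>2 m"
      by (simp add: B\<^sub>1_def B\<^sub>2_def left_diff_distrib)
    also have "\<dots> = - (\<Sum>i<m. ((w\<^sub>1 (m - i) - w\<^sub>2 (m - i)) * B\<^sub>1 i + w\<^sub>2 (m - i) * (B\<^sub>1 i - B\<^sub>2 i)) * c i)"
      unfolding B\<^sub>1_rec B\<^sub>2_rec by (simp add: algebra_simps sum_subtractf)
    also have "pval_ge p s \<dots>"
    proof (intro pval_ge_uminus pval_ge_sum)
      fix i assume "i \<in> {..<m}"
      then have "i < m" "1 \<le> m - i" "m - i \<le> n"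
        using less.prems by auto
      have B\<^sub>1: "pval_ge p 0 (B\<^sub>1 i)"
        unfolding B\<^sub>1_def using \<open>i < m\<close> less.prems w
        by (intro pval_ge_superfact_scaled[OF assms(1) rec\<^sub>1]) auto
      have B\<^sub>1\<^sub>2: "pval_ge p s (B\<^sub>1 i - B\<^sub>2 i)"
        unfolding B\<^sub>1_def B\<^sub>2_def left_diff_distrib[symmetric] using \<open>i < m\<close> less by simp
      have w\<^sub>2: "pval_ge p 0 (w\<^sub>2 (m - i))" and w\<^sub>1\<^sub>2: "pval_ge p s (w\<^sub>1 (m - i) - w\<^sub>2 (m - i))"
        using w[OF \<open>1 \<le> m - i\<close> \<open>m - i \<le> n\<close>] by auto
      have "pval_ge p s ((w\<^sub>1 (m - i) - w\<^sub>2 (m - i)) * B\<^sub>1 i)"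
        using pval_ge_mult[OF w\<^sub>1\<^sub>2 B\<^sub>1] by simp
      moreover have "pval_ge p s (w\<^sub>2 (m - i) * (B\<^sub>1 i - B\<^sub>2 i))"
        using pval_ge_mult[OF w\<^sub>2 B\<^sub>1\<^sub>2] by simp
      ultimately have "pval_ge p s ((w\<^sub>1 (m - i) - w\<^sub>2 (m - i)) * B\<^sub>1 i + w\<^sub>2 (m - i) * (B\<^sub>1 i - B\<^sub>2 i))"
        by (rule pval_ge_add)
      then show "pval_ge p s
          (((w\<^sub>1 (m - i) - w\<^sub>2 (m - i)) * B\<^sub>1 i + w\<^sub>2 (m - i) * (B\<^sub>1 i - B\<^sub>2 i)) * c i)"
        unfolding c_def using pval_ge_mult[OF _ pval_ge_of_nat, of s] by simp
    qed
    finally show ?thesis .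
  qed
qed

lemma pval_ge_hyp_weight_near_one:
  assumes "N \<ge> 2" "s \<ge> 1"
    and "\<And>j. 1 \<le> j \<Longrightarrow> j \<le> k \<Longrightarrow> s \<le> int (multiplicity p (N - 1)) - int (multiplicity p (Suc j))"
  shows "pval_ge p 0 (hyp_weight N k) \<and> pval_ge p s (hyp_weight N k - 1)"
proof -
  have "pval_ge p 0 (\<Prod>j\<in>{1..k}. 1 / (1 + of_nat (N - 1) / of_nat (1 + j))) \<and>
        pval_ge p s ((\<Prod>j\<in>{1..k}. 1 / (1 + of_nat (N - 1) / of_nat (1 + j))) - 1)"
  proof (rule pval_ge_prod_near_one)
    fix j assume "j \<in> {1..k}"
    have "pval_ge p (int (multiplicity p (N - 1)) + - int (multiplicity p (Suc j)))
            (of_nat (N - 1) * (1 / of_nat (Suc j)))"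
      using assms(1) by (intro pval_ge_mult pval_ge_of_nat_multiplicity) auto
    then have "pval_ge p s (of_nat (N - 1) * (1 / of_nat (1 + j)))"
      using \<open>j \<in> {1..k}\<close> assms(3) pval_ge_mono by simp
    then show "pval_ge p 0 (1 / (1 + of_nat (N - 1) / of_nat (1 + j))) \<and>
               pval_ge p s (1 / (1 + of_nat (N - 1) / of_nat (1 + j)) - 1)"
      using pval_ge_inverse_one_plus[OF _ \<open>s \<ge> 1\<close>] by simp
  qed
  then show ?thesis
    using hyp_weight_eq_prod[of N k] assms(1) by simp
qed

lemma pval_ge_scaled_hyp_bernoulli_diff:
  assumes "N \<ge> 2" "n \<ge> 1" "\<not> (p - 1) dvd n"
    and "multiplicity p (fact n :: nat) < multiplicity p (N - 1)"
  shows "pval_ge p (int (multiplicity p (N - 1)) - int (multiplicity p (fact n :: nat)))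
           ((hyp_bernoulli N n / fact n - hyp_bernoulli 1 n / fact n) * of_nat (superfact (Suc n)))"
proof (rule pval_ge_superfact_scaled_diff[where w\<^sub>1 = "hyp_weight N" and w\<^sub>2 = "hyp_weight 1"])
  fix k :: nat assume "k \<le> n"
  have "pval_ge p 0 (hyp_weight N k) \<and>
      pval_ge p (int (multiplicity p (N - 1)) - int (multiplicity p (fact n :: nat))) (hyp_weight N k - 1)"
    using assms(1,4) \<open>k \<le> n\<close> multiplicity_Suc_le_multiplicity_fact[OF assms(3,2)]
    by (intro pval_ge_hyp_weight_near_one) auto
  then show "pval_ge p 0 (hyp_weight N k) \<and> pval_ge p 0 (hyp_weight 1 k) \<and>
      pval_ge p (int (multiplicity p (N - 1)) - int (multiplicity p (fact n :: nat)))
        (hyp_weight N k - hyp_weight 1 k)"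
    using pval_ge_of_int[of 1] by (simp add: hyp_weight_Suc_0)
qed (use assms in \<open>simp_all add: hyp_bernoulli_0 hyp_bernoulli_recurrence\<close>)

lemma pval_ge_hyp_bernoulli_div_diff:
  assumes "N \<ge> 2" "n \<ge> 1" "\<not> (p - 1) dvd n"
    and "multiplicity p (fact n :: nat) < multiplicity p (N - 1)"
  shows "pval_ge p (int (multiplicity p (N - 1)) - int (multiplicity p n)
                      - int (multiplicity p (superfact (Suc n))))
           (hyp_bernoulli N n / of_nat n - hyp_bernoulli 1 n / of_nat n)"
proof -
  have "hyp_bernoulli N n / of_nat n - hyp_bernoulli 1 n / of_nat n =
      (hyp_bernoulli N n / fact n - hyp_bernoulli 1 n / fact n) * of_nat (superfact (Suc n))
        * (of_nat (fact n) * ((1 / of_nat n) * (1 / of_nat (superfact (Suc n)))))"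
    using superfact_pos[of "Suc n"] assms(2) by (simp add: field_simps)
  also have "pval_ge p (int (multiplicity p (N - 1)) - int (multiplicity p n)
                          - int (multiplicity p (superfact (Suc n)))) \<dots>"
  proof (rule pval_ge_mult_mono[OF pval_ge_scaled_hyp_bernoulli_diff[OF assms]])
    show "pval_ge p (int (multiplicity p (fact n :: nat))
                     + (- int (multiplicity p n) + - int (multiplicity p (superfact (Suc n)))))
            (of_nat (fact n) * ((1 / of_nat n) * (1 / of_nat (superfact (Suc n)))))"
      using assms(2) superfact_pos[of "Suc n"]
      by (intro pval_ge_mult pval_ge_of_nat_multiplicity) simp_all
  qed simp
  finally show ?thesis .
qed

end

theorem corollary1:
  fixes p N n \<nu> :: nat
  assumes "prime p" and "N \<ge> 1" and "n \<ge> 1"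
    and "\<not> (p - 1) dvd n"
    and "N = 1 \<or> multiplicity p (N - 1) \<ge>
           \<nu> + 1 + multiplicity p (\<Prod>k=0..n. fact (1 + k) :: nat) + multiplicity p n"
  shows "qcong p (\<nu> + 1) (hyp_bernoulli N n / of_nat n) (bernoulli_num n / of_nat n)"
proof (cases "N = 1")
  case True
  then show ?thesis
    unfolding qcong_def by (simp add: bernoulli_num_eq_hyp_bernoulli_1)
next
  case False
  define M L where "M = multiplicity p (N - 1)" and "L = multiplicity p (superfact (Suc n))"
  have "multiplicity p (fact n :: nat) \<le> L"
    unfolding L_def using superfact_pos[of "Suc n"]
    by (intro dvd_imp_multiplicity_le fact_dvd_superfact) auto
  moreover have bound: "\<nu> + 1 + L + multiplicity p n \<le> M"
    using assms(5) False unfolding M_def L_def superfact_Suc_eq_prod by simp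
  ultimately have "pval_ge p (int M - int (multiplicity p n) - int L)
      (hyp_bernoulli N n / of_nat n - bernoulli_num n / of_nat n)"
    using False assms unfolding M_def L_def bernoulli_num_eq_hyp_bernoulli_1
    by (intro pval_ge_hyp_bernoulli_div_diff) simp_all
  then have "pval_ge p (int (\<nu> + 1)) (hyp_bernoulli N n / of_nat n - bernoulli_num n / of_nat n)"
    by (rule pval_ge_mono[OF assms(1)]) (use bound in simp)
  then show ?thesis
    by (rule qcong_if_pval_ge[OF assms(1)])
qed

end
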